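(* Let $p\ge 2$ and let $\mathbb{F}_p$ be a binary floating-point format with unit roundoff $u=2^{-p}$. Let $t\ge1$ and $s_A,s_B\ge1$ be integers, and let $A\in\mathbb{F}_p^{m\times k}$, $B\in\mathbb{F}_p^{k\times n}$ have all entries nonzero. With the scale factors $\alpha,\beta$ and integer slices $A_{(\ell)}$, $B^{(h)}$ defined in the context, let $$C'=\alpha\beta^T\circ\sum_{\substack{1\le\ell\le s_A,\ 1\le h\le s_B\\ \ell+h\le\max(s_A,s_B)+1}}2^{-(\ell+h)t}A_{(\ell)}B^{(h)},$$ a sum of $\chi(s_A,s_B)=s_m(2s_M-s_m+1)/2$ matrices, where $s_M=\max(s_A,s_B)$, $s_m=\min(s_A,s_B)$. Suppose $\hat C'$ is computed by forming each such product $A_{(\ell)}B^{(h)}$ exactly, converting it exactly to $\mathbb{F}_p$ and scaling it exactly by $2^{-(\ell+h)t}$ and $\alpha\beta^T$, and adding the resulting $\psi=\chi(s_A,s_B)$ matrices entrywise in floating-point arithmetic (in any order) satisfying $\mathrm{fl}(x+y)=(x+y)(1+\delta)$, $|\delta|\le u$, with no overflow or underflow, and $\psi u<1$. Then, entrywise: if $s_A\le s_B$, $$|AB-\hat C'|\le\bigl(\zeta_{A,B}+2^{-s_Bt}s_A\kappa_A\kappa_B+\gamma_\psi(1+\zeta_{A,B}+2^{-s_Bt}s_A\kappa_A\kappa_B)\bigr)|A|\,|B|,$$ and if $s_A>s_B$, $$|AB-\hat C'|\le\bigl(\zeta_{A,B}+2^{-s_At}s_B\kappa_A\kappa_B+\gamma_\psi(1+\zeta_{A,B}+2^{-s_At}s_B\kappa_A\kappa_B)\bigr)|A|\,|B|,$$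 where $\zeta_{A,B}=2^{-s_At}\kappa_A+2^{-s_Bt}\kappa_B+2^{-(s_A+s_B)t}\kappa_A\kappa_B$ and $\gamma_j=ju/(1-ju)$.
   Context: Absolute values of matrices and inequalities between matrices are entrywise; $\circ$ is the Hadamard product. For $x\in\mathbb{R}$, $[x]$ denotes truncation toward zero. Scale factors: $\alpha_i$ is the smallest power of two strictly larger than $\max_{1\le j\le k}|a_{ij}|$, and $\beta_j$ is the smallest power of two strictly larger than $\max_{1\le i\le k}|b_{ij}|$. Slices: $A_{(\ell)}=\bigl[2^{\ell t}\bigl(\mathrm{diag}(\alpha)^{-1}A-\sum_{r=1}^{\ell-1}2^{-rt}A_{(r)}\bigr)\bigr]$ for $\ell=1,\dots,s_A$, and $B^{(h)}=\bigl[2^{ht}\bigl(B\,\mathrm{diag}(\beta)^{-1}-\sum_{r=1}^{h-1}2^{-rt}B^{(r)}\bigr)\bigr]$ for $h=1,\dots,s_B$, applied entrywise. Scaling measures: $\kappa_A=2\max_i\frac{\max_j|a_{ij}|}{\min_j|a_{ij}|}$ and $\kappa_B=2\max_j\frac{\max_i|b_{ij}|}{\min_i|b_{ij}|}$. *)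

theory Defs
  imports Complex_Main "HOL-Library.Multiset"
begin

text \<open>Binary floating-point format with precision p (unit roundoff 2^-p),
  unbounded exponent range (no overflow / underflow).\<close>
definition Fp :: "nat \<Rightarrow> real set" where
  "Fp p = {x. \<exists>(M::int) (e::int). x = real_of_int M * 2 powr real_of_int e \<and> \<bar>M\<bar> < 2 ^ p}"

definition trunc0 :: "real \<Rightarrow> real" where
  "trunc0 x = (if x \<ge> 0 then real_of_int \<lfloor>x\<rfloor> else real_of_int \<lceil>x\<rceil>)"

definition pow2_above :: "real \<Rightarrow> real" where
  "pow2_above y = (LEAST z. y < z \<and> (\<exists>e::int. z = 2 powr real_of_int e))"

definition alpha :: "nat \<Rightarrow> (nat \<Rightarrow> nat \<Rightarrow> real) \<Rightarrow> nat \<Rightarrow> real" where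
  "alpha k A i = pow2_above (Max {\<bar>A i j\<bar> | j. j < k})"

definition beta :: "nat \<Rightarrow> (nat \<Rightarrow> nat \<Rightarrow> real) \<Rightarrow> nat \<Rightarrow> real" where
  "beta k B j = pow2_above (Max {\<bar>B i j\<bar> | i. i < k})"

function slc :: "nat \<Rightarrow> real \<Rightarrow> nat \<Rightarrow> real" where
  "slc t x l = (if l = 0 then 0 else
     trunc0 (2 ^ (l * t) * (x - (\<Sum>r\<in>{1..<l}. slc t x r / 2 ^ (r * t)))))"
  by auto
termination by (relation "measure (\<lambda>(t, x, l). l)") auto

definition sliceA :: "nat \<Rightarrow> nat \<Rightarrow> (nat \<Rightarrow> nat \<Rightarrow> real) \<Rightarrow> nat \<Rightarrow> nat \<Rightarrow> nat \<Rightarrow> real" where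
  "sliceA t k A l i j = slc t (A i j / alpha k A i) l"

definition sliceB :: "nat \<Rightarrow> nat \<Rightarrow> (nat \<Rightarrow> nat \<Rightarrow> real) \<Rightarrow> nat \<Rightarrow> nat \<Rightarrow> nat \<Rightarrow> real" where
  "sliceB t k B h i j = slc t (B i j / beta k B j) h"

definition matmul :: "nat \<Rightarrow> (nat \<Rightarrow> nat \<Rightarrow> real) \<Rightarrow> (nat \<Rightarrow> nat \<Rightarrow> real) \<Rightarrow> nat \<Rightarrow> nat \<Rightarrow> real" where
  "matmul k A B i j = (\<Sum>q<k. A i q * B q j)"

definition kappaA :: "nat \<Rightarrow> nat \<Rightarrow> (nat \<Rightarrow> nat \<Rightarrow> real) \<Rightarrow> real" where
  "kappaA m k A = 2 * Max {Max {\<bar>A i j\<bar> | j. j < k} / Min {\<bar>A i j\<bar> | j. j < k} | i. i < m}"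

definition kappaB :: "nat \<Rightarrow> nat \<Rightarrow> (nat \<Rightarrow> nat \<Rightarrow> real) \<Rightarrow> real" where
  "kappaB k n B = 2 * Max {Max {\<bar>B i j\<bar> | i. i < k} / Min {\<bar>B i j\<bar> | i. i < k} | j. j < n}"

definition slice_pairs :: "nat \<Rightarrow> nat \<Rightarrow> (nat \<times> nat) set" where
  "slice_pairs sA sB = {(l, h). 1 \<le> l \<and> l \<le> sA \<and> 1 \<le> h \<and> h \<le> sB \<and> l + h \<le> max sA sB + 1}"

definition chi :: "nat \<Rightarrow> nat \<Rightarrow> nat" where
  "chi sA sB = min sA sB * (2 * max sA sB - min sA sB + 1) div 2"

definition gamma :: "nat \<Rightarrow> real \<Rightarrow> real" where
  "gamma j u = j * u / (1 - j * u)"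

text \<open>Floating-point summation of a (multi)set of terms in any order
  (any binary summation tree), each addition satisfying
  fl(x+y) = (x+y)(1+delta), |delta| <= u = 2^-p, with result in Fp p.\<close>
inductive fp_sum :: "nat \<Rightarrow> real multiset \<Rightarrow> real \<Rightarrow> bool" for p where
  single: "fp_sum p {#x#} x"
| add: "\<lbrakk>fp_sum p M1 a; fp_sum p M2 b; \<bar>\<delta>\<bar> \<le> 2 powr (- real p);
         (a + b) * (1 + \<delta>) \<in> Fp p\<rbrakk> \<Longrightarrow> fp_sum p (M1 + M2) ((a + b) * (1 + \<delta>))"

definition slice_terms :: "nat \<Rightarrow> nat \<Rightarrow> nat \<Rightarrow> nat \<Rightarrow>
    (nat \<Rightarrow> nat \<Rightarrow> real) \<Rightarrow> (nat \<Rightarrow> nat \<Rightarrow> real) \<Rightarrow> nat \<Rightarrow> nat \<Rightarrow> real multiset" where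
  "slice_terms t sA sB k A B i j =
     image_mset (\<lambda>(l, h). alpha k A i * beta k B j *
        (matmul k (sliceA t k A l) (sliceB t k B h) i j / 2 ^ ((l + h) * t)))
       (mset_set (slice_pairs sA sB))"

end

theory Submission
  imports Defs
begin

text \<open>After scaling, every entry x = a / alpha lies in (-1, 1), and its slices
  expand it as x = X + e with X the sum of the kept slices scaled by 2^(-lt) and
  |e| < 2^(-s t). Because truncation is toward zero, all slices carry the sign of x, so the
  absolute values of the scaled slices add up to at most |x|. The product x y then differs from the
  retained slice products by e Y + X f + e f and by the discarded products with l + h > s_M + 1;
  each of the s_m rows of discarded products contributes at most 2^(-s_M t). Undoing the scaling
  with alpha \<le> kappa_A |a| and beta \<le> kappa_B |b| yields the truncation error
  (zeta + s_m 2^(-s_M t) kappa_A kappa_B) |A| |B|. The floating-point summation of the psi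
  terms adds the classical gamma_psi bound relative to the sum of their absolute values, which is
  again at most |A| |B|.\<close>

section \<open>Slicing a real number\<close>

declare slc.simps [simp del]

lemma trunc0_split:
  "\<bar>trunc0 y\<bar> + \<bar>y - trunc0 y\<bar> = \<bar>y\<bar>" "\<bar>y - trunc0 y\<bar> < 1"
  unfolding trunc0_def by (simp_all split: if_split; linarith)+

text \<open>For x = a_ij / alpha_i, scaled_slice t x l is the (i, j) entry of 2^(-lt) A_(l).\<close>
definition scaled_slice :: "nat \<Rightarrow> real \<Rightarrow> nat \<Rightarrow> real" where
  "scaled_slice t x l = slc t x l / 2 ^ (l * t)"

definition slice_remainder :: "nat \<Rightarrow> real \<Rightarrow> nat \<Rightarrow> real" where
  "slice_remainder t x s = x - (\<Sum>l\<in>{1..s}. scaled_slice t x l)"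

lemma slice_remainder_0 [simp]: "slice_remainder t x 0 = x"
  by (simp add: slice_remainder_def)

lemma slice_remainder_Suc:
  "slice_remainder t x (Suc l) = slice_remainder t x l - scaled_slice t x (Suc l)"
  by (simp add: slice_remainder_def)

lemma scaled_slice_Suc:
  "scaled_slice t x (Suc l) = trunc0 (2 ^ (Suc l * t) * slice_remainder t x l) / 2 ^ (Suc l * t)"
  unfolding scaled_slice_def
  by (subst slc.simps)
    (simp add: slice_remainder_def scaled_slice_def atLeastLessThanSuc_atLeastAtMost)

lemma slice_step:
  obtains y P where "P = 2 ^ (Suc l * t)" "slice_remainder t x l = y / P"
    "scaled_slice t x (Suc l) = trunc0 y / P" "slice_remainder t x (Suc l) = (y - trunc0 y) / P"
proof
  let ?P = "2 ^ (Suc l * t) :: real"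
  show "slice_remainder t x l = (?P * slice_remainder t x l) / ?P" by simp
  show "scaled_slice t x (Suc l) = trunc0 (?P * slice_remainder t x l) / ?P"
    by (rule scaled_slice_Suc)
  then show "slice_remainder t x (Suc l)
      = (?P * slice_remainder t x l - trunc0 (?P * slice_remainder t x l)) / ?P"
    by (simp add: slice_remainder_Suc diff_divide_distrib)
qed simp

lemma abs_scaled_slice_add_remainder:
  "\<bar>scaled_slice t x (Suc l)\<bar> + \<bar>slice_remainder t x (Suc l)\<bar> = \<bar>slice_remainder t x l\<bar>"
proof -
  obtain y P where "P = 2 ^ (Suc l * t)" and "slice_remainder t x l = y / P"
    "scaled_slice t x (Suc l) = trunc0 y / P" "slice_remainder t x (Suc l) = (y - trunc0 y) / P"
    by (rule slice_step)
  then show ?thesis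
    using trunc0_split(1)[of y] by (simp add: abs_div add_divide_distrib[symmetric])
qed

lemma abs_slice_remainder_less: "\<bar>x\<bar> < 1 \<Longrightarrow> \<bar>slice_remainder t x l\<bar> < 1 / 2 ^ (l * t)"
proof (cases l)
  case (Suc l')
  obtain y P where "P = 2 ^ (Suc l' * t)" and "slice_remainder t x (Suc l') = (y - trunc0 y) / P"
    by (rule slice_step)
  then show ?thesis
    using Suc trunc0_split(2)[of y] by (simp add: abs_div divide_strict_right_mono)
qed simp

lemma sum_abs_scaled_slices:
  "a \<le> s \<Longrightarrow>
    (\<Sum>l\<in>{Suc a..s}. \<bar>scaled_slice t x l\<bar>) = \<bar>slice_remainder t x a\<bar> - \<bar>slice_remainder t x s\<bar>"
proof (induction s rule: dec_induct)
  case (step s)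
  then show ?case using abs_scaled_slice_add_remainder[of t x s] by (simp add: sum.cl_ivl_Suc)
qed simp

lemma sum_abs_scaled_slices_le: "(\<Sum>l\<in>{1..s}. \<bar>scaled_slice t x l\<bar>) \<le> \<bar>x\<bar>"
  using sum_abs_scaled_slices[of 0 s t x] by simp

lemma abs_sum_scaled_slices_tail_le:
  assumes "\<bar>x\<bar> < 1" and "H \<ge> 1"
  shows "\<bar>\<Sum>l\<in>{H..s}. scaled_slice t x l\<bar> \<le> 1 / 2 ^ ((H - 1) * t)"
proof (cases "H - 1 \<le> s")
  case True
  have "\<bar>\<Sum>l\<in>{H..s}. scaled_slice t x l\<bar> \<le> (\<Sum>l\<in>{Suc (H - 1)..s}. \<bar>scaled_slice t x l\<bar>)"
    using \<open>H \<ge> 1\<close> by (simp add: sum_abs)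
  also have "\<dots> \<le> \<bar>slice_remainder t x (H - 1)\<bar>"
    using sum_abs_scaled_slices[OF True] by simp
  also have "\<dots> \<le> 1 / 2 ^ ((H - 1) * t)"
    using abs_slice_remainder_less[OF \<open>\<bar>x\<bar> < 1\<close>] less_imp_le by blast
  finally show ?thesis .
qed simp

section \<open>Products of slices\<close>

definition pairs_beyond :: "nat \<Rightarrow> nat \<Rightarrow> nat \<Rightarrow> (nat \<times> nat) set" where
  "pairs_beyond a b M = {(l, h). 1 \<le> l \<and> l \<le> a \<and> 1 \<le> h \<and> h \<le> b \<and> M + 1 < l + h}"

lemma pairs_beyond_swap:
  "(\<Sum>(l, h)\<in>pairs_beyond a b M. f l h) = (\<Sum>(h, l)\<in>pairs_beyond b a M. f l h)"
  by (rule sum.reindex_bij_witness[of _ prod.swap prod.swap]) (auto simp: pairs_beyond_def)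

text \<open>In row l the scaled slice of x is at most 2^((1-l)t) and the scaled slices of y in
  columns h > M + 1 - l sum to at most 2^((l-M-1)t), so every row contributes 2^(-Mt).\<close>
lemma abs_sum_pairs_beyond_le:
  assumes x: "\<bar>x\<bar> < 1" and y: "\<bar>y\<bar> < 1" and "a \<le> M"
  shows "\<bar>\<Sum>(l, h)\<in>pairs_beyond a b M. scaled_slice t x l * scaled_slice t y h\<bar>
    \<le> real a / 2 ^ (M * t)"
proof -
  have "pairs_beyond a b M = Sigma {1..a} (\<lambda>l. {M + 2 - l..b})"
    using \<open>a \<le> M\<close> by (auto simp: pairs_beyond_def)
  then have "(\<Sum>(l, h)\<in>pairs_beyond a b M. scaled_slice t x l * scaled_slice t y h)
      = (\<Sum>l\<in>{1..a}. scaled_slice t x l * (\<Sum>h\<in>{M + 2 - l..b}. scaled_slice t y h))"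
    by (simp add: sum.Sigma sum_distrib_left)
  also have "\<bar>\<dots>\<bar> \<le> (\<Sum>l\<in>{1..a}. 1 / 2 ^ (M * t))"
  proof (rule order_trans[OF sum_abs sum_mono])
    fix l assume l: "l \<in> {1..a}"
    have "\<bar>scaled_slice t x l\<bar> \<le> 1 / 2 ^ ((l - 1) * t)"
      using abs_sum_scaled_slices_tail_le[OF x, where H = l and s = l and t = t] l by simp
    moreover have "\<bar>\<Sum>h\<in>{M + 2 - l..b}. scaled_slice t y h\<bar> \<le> 1 / 2 ^ ((M + 1 - l) * t)"
      using abs_sum_scaled_slices_tail_le[OF y, where H = "M + 2 - l" and s = b and t = t] l \<open>a \<le> M\<close>
      by (simp add: Suc_diff_le)
    ultimately have "\<bar>scaled_slice t x l * (\<Sum>h\<in>{M + 2 - l..b}. scaled_slice t y h)\<bar>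
        \<le> 1 / 2 ^ ((l - 1) * t) * (1 / 2 ^ ((M + 1 - l) * t))"
      unfolding abs_mult by (rule mult_mono) auto
    also have "\<dots> = 1 / 2 ^ (M * t)"
      using l \<open>a \<le> M\<close> by (simp add: power_add[symmetric] add_mult_distrib[symmetric])
    finally show "\<bar>scaled_slice t x l * (\<Sum>h\<in>{M + 2 - l..b}. scaled_slice t y h)\<bar>
        \<le> 1 / 2 ^ (M * t)" .
  qed
  finally show ?thesis by simp
qed

lemma sum_abs_slice_products_le:
  assumes "P \<subseteq> {1..sA} \<times> {1..sB}"
  shows "(\<Sum>(l, h)\<in>P. \<bar>scaled_slice t x l\<bar> * \<bar>scaled_slice t y h\<bar>) \<le> \<bar>x\<bar> * \<bar>y\<bar>"
proof -
  have "(\<Sum>(l, h)\<in>P. \<bar>scaled_slice t x l\<bar> * \<bar>scaled_slice t y h\<bar>)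
      \<le> (\<Sum>(l, h)\<in>{1..sA} \<times> {1..sB}. \<bar>scaled_slice t x l\<bar> * \<bar>scaled_slice t y h\<bar>)"
    by (rule sum_mono2[OF _ assms]) auto
  also have "\<dots> = (\<Sum>l\<in>{1..sA}. \<bar>scaled_slice t x l\<bar>) * (\<Sum>h\<in>{1..sB}. \<bar>scaled_slice t y h\<bar>)"
    by (simp add: sum_product sum.cartesian_product)
  also have "\<dots> \<le> \<bar>x\<bar> * \<bar>y\<bar>"
    by (rule mult_mono[OF sum_abs_scaled_slices_le sum_abs_scaled_slices_le])
      (auto intro: sum_nonneg)
  finally show ?thesis .
qed

lemma slice_pairs_subset: "slice_pairs sA sB \<subseteq> {1..sA} \<times> {1..sB}"
  by (auto simp: slice_pairs_def)

lemma finite_slice_pairs: "finite (slice_pairs sA sB)"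
  using finite_subset[OF slice_pairs_subset] by blast

lemma slice_product_error:
  assumes x: "\<bar>x\<bar> < 1" and y: "\<bar>y\<bar> < 1"
  shows "\<bar>x * y - (\<Sum>(l, h)\<in>slice_pairs sA sB. scaled_slice t x l * scaled_slice t y h)\<bar>
    \<le> \<bar>y\<bar> / 2 ^ (sA * t) + \<bar>x\<bar> / 2 ^ (sB * t) + 1 / 2 ^ ((sA + sB) * t)
      + real (min sA sB) / 2 ^ (max sA sB * t)"
proof -
  define M where "M = max sA sB"
  define X where "X = (\<Sum>l\<in>{1..sA}. scaled_slice t x l)"
  define Y where "Y = (\<Sum>h\<in>{1..sB}. scaled_slice t y h)"
  define e where "e = slice_remainder t x sA"
  define f where "f = slice_remainder t y sB"
  define D where "D = (\<Sum>(l, h)\<in>pairs_beyond sA sB M. scaled_slice t x l * scaled_slice t y h)"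
  have split: "{1..sA} \<times> {1..sB} = slice_pairs sA sB \<union> pairs_beyond sA sB M"
    and disjoint: "slice_pairs sA sB \<inter> pairs_beyond sA sB M = {}"
    by (auto simp: slice_pairs_def pairs_beyond_def M_def)
  have "finite (pairs_beyond sA sB M)"
    by (rule finite_subset[of _ "{1..sA} \<times> {1..sB}"]) (auto simp: pairs_beyond_def)
  have "X * Y = (\<Sum>(l, h)\<in>{1..sA} \<times> {1..sB}. scaled_slice t x l * scaled_slice t y h)"
    by (simp add: X_def Y_def sum_product sum.cartesian_product)
  also have "\<dots> = (\<Sum>(l, h)\<in>slice_pairs sA sB. scaled_slice t x l * scaled_slice t y h) + D"
    unfolding split D_def
    by (rule sum.union_disjoint[OF finite_slice_pairs \<open>finite (pairs_beyond sA sB M)\<close> disjoint])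
  finally have "X * Y = (\<Sum>(l, h)\<in>slice_pairs sA sB. scaled_slice t x l * scaled_slice t y h) + D" .
  moreover have "x = X + e" "y = Y + f"
    by (simp_all add: X_def Y_def e_def f_def slice_remainder_def)
  ultimately have err: "x * y - (\<Sum>(l, h)\<in>slice_pairs sA sB. scaled_slice t x l * scaled_slice t y h)
      = D + e * Y + X * f + e * f"
    by (simp add: algebra_simps)
  have "\<bar>D\<bar> \<le> real sA / 2 ^ (M * t)"
    unfolding D_def by (rule abs_sum_pairs_beyond_le[OF x y]) (simp add: M_def)
  moreover have "\<bar>D\<bar> \<le> real sB / 2 ^ (M * t)"
    unfolding D_def pairs_beyond_swap[of _ sA] mult.commute[of "scaled_slice t x _"]
    by (rule abs_sum_pairs_beyond_le[OF y x]) (simp add: M_def)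
  ultimately have D: "\<bar>D\<bar> \<le> real (min sA sB) / 2 ^ (M * t)"
    by (simp add: min_def)
  have X: "\<bar>X\<bar> \<le> \<bar>x\<bar>" and Y: "\<bar>Y\<bar> \<le> \<bar>y\<bar>"
    unfolding X_def Y_def using sum_abs order_trans sum_abs_scaled_slices_le by blast+
  have e: "\<bar>e\<bar> \<le> 1 / 2 ^ (sA * t)" and f: "\<bar>f\<bar> \<le> 1 / 2 ^ (sB * t)"
    unfolding e_def f_def
    using abs_slice_remainder_less[OF x] abs_slice_remainder_less[OF y] less_imp_le by blast+
  have "\<bar>e * Y\<bar> \<le> \<bar>y\<bar> / 2 ^ (sA * t)"
    using mult_mono[OF e Y] by (simp add: abs_mult)
  moreover have "\<bar>X * f\<bar> \<le> \<bar>x\<bar> / 2 ^ (sB * t)"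
    using mult_mono[OF X f] by (simp add: abs_mult)
  moreover have "\<bar>e * f\<bar> \<le> 1 / 2 ^ ((sA + sB) * t)"
    using mult_mono[OF e f] by (simp add: abs_mult power_add add_mult_distrib)
  ultimately show ?thesis
    unfolding err M_def[symmetric] using D by linarith
qed

section \<open>Scale factors\<close>

lemma pow2_above_bounds:
  assumes "y > 0"
  shows "y < pow2_above y" and "pow2_above y \<le> 2 * y"
proof -
  define f where "f = \<lfloor>log 2 y\<rfloor>"
  have "2 powr real_of_int f \<le> y"
    using powr_mono[of "real_of_int f" "log 2 y" 2] assms by (simp add: f_def)
  moreover have "y < 2 powr real_of_int (f + 1)"
    using powr_less_mono[of "log 2 y" "real_of_int (f + 1)" 2] assms by (simp add: f_def)
  moreover have "pow2_above y = 2 powr real_of_int (f + 1)"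
    unfolding pow2_above_def
  proof (rule Least_equality)
    fix z assume "y < z \<and> (\<exists>e::int. z = 2 powr real_of_int e)"
    then obtain e :: int where z: "z = 2 powr real_of_int e" "y < z"
      by blast
    with \<open>2 powr real_of_int f \<le> y\<close> have "2 powr real_of_int f < 2 powr real_of_int e"
      by linarith
    then have "f < e"
      by simp
    then show "2 powr real_of_int (f + 1) \<le> z"
      unfolding z(1) by (intro powr_mono) simp_all
  qed (use \<open>y < 2 powr real_of_int (f + 1)\<close> in blast)
  ultimately show "y < pow2_above y" "pow2_above y \<le> 2 * y"
    by (simp_all add: powr_add)
qed

lemma pow2_above_Max_bounds:
  fixes f :: "nat \<Rightarrow> real"
  assumes nonzero: "\<And>q. q < k \<Longrightarrow> f q \<noteq> 0"
    and \<kappa>: "2 * (Max {\<bar>f q\<bar> | q. q < k} / Min {\<bar>f q\<bar> | q. q < k}) \<le> \<kappa>"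
    and "q < k"
  shows "\<bar>f q\<bar> < pow2_above (Max {\<bar>f q\<bar> | q. q < k})"
    and "pow2_above (Max {\<bar>f q\<bar> | q. q < k}) \<le> \<kappa> * \<bar>f q\<bar>"
proof -
  define S where "S = {\<bar>f q\<bar> | q. q < k}"
  have S: "S = (\<lambda>q. \<bar>f q\<bar>) ` {..<k}" "finite S" "\<bar>f q\<bar> \<in> S"
    using \<open>q < k\<close> by (auto simp: S_def)
  have "Min S > 0"
    using Min_in[of S] S nonzero by fastforce
  have "\<bar>f q\<bar> \<le> Max S" "Min S \<le> \<bar>f q\<bar>"
    using S by simp_all
  with \<open>Min S > 0\<close> have "Max S > 0"
    by linarith
  have "pow2_above (Max S) \<le> 2 * Max S"
    by (rule pow2_above_bounds(2)[OF \<open>Max S > 0\<close>])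
  also have "\<dots> = 2 * (Max S / Min S) * Min S"
    using \<open>Min S > 0\<close> by simp
  also have "\<dots> \<le> \<kappa> * \<bar>f q\<bar>"
    using \<kappa> \<open>Min S > 0\<close> \<open>Min S \<le> \<bar>f q\<bar>\<close> divide_pos_pos[OF \<open>Max S > 0\<close> \<open>Min S > 0\<close>]
    unfolding S_def[symmetric] by (intro mult_mono) auto
  finally show "pow2_above (Max S) \<le> \<kappa> * \<bar>f q\<bar>" .
  show "\<bar>f q\<bar> < pow2_above (Max S)"
    using pow2_above_bounds(1)[OF \<open>Max S > 0\<close>] \<open>\<bar>f q\<bar> \<le> Max S\<close> by linarith
qed

lemma alpha_bounds:
  assumes "i < m" and "\<And>q. q < k \<Longrightarrow> A i q \<noteq> 0" and "q < k"
  shows "\<bar>A i q\<bar> < alpha k A i \<and> alpha k A i \<le> kappaA m k A * \<bar>A i q\<bar>"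
proof -
  let ?r = "\<lambda>i. Max {\<bar>A i q\<bar> | q. q < k} / Min {\<bar>A i q\<bar> | q. q < k}"
  have "{?r i | i. i < m} = ?r ` {..<m}"
    by auto
  moreover have "?r i \<le> Max (?r ` {..<m})"
    using \<open>i < m\<close> by (intro Max_ge) auto
  ultimately have "2 * ?r i \<le> kappaA m k A"
    unfolding kappaA_def by simp
  then show ?thesis
    unfolding alpha_def using pow2_above_Max_bounds[of k "A i"] assms by blast
qed

lemma beta_bounds:
  assumes "j < n" and "\<And>q. q < k \<Longrightarrow> B q j \<noteq> 0" and "q < k"
  shows "\<bar>B q j\<bar> < beta k B j \<and> beta k B j \<le> kappaB k n B * \<bar>B q j\<bar>"
proof -
  let ?r = "\<lambda>j. Max {\<bar>B q j\<bar> | q. q < k} / Min {\<bar>B q j\<bar> | q. q < k}"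
  have "{?r j | j. j < n} = ?r ` {..<n}"
    by auto
  moreover have "?r j \<le> Max (?r ` {..<n})"
    using \<open>j < n\<close> by (intro Max_ge) auto
  ultimately have "2 * ?r j \<le> kappaB k n B"
    unfolding kappaB_def by simp
  then show ?thesis
    unfolding beta_def using pow2_above_Max_bounds[of k "\<lambda>q. B q j"] assms by blast
qed

lemma kappaA_gt_1:
  assumes "i < m" and "k \<ge> 1" and "\<And>q. q < k \<Longrightarrow> A i q \<noteq> 0"
  shows "1 < kappaA m k A"
proof -
  have "\<bar>A i 0\<bar> < alpha k A i \<and> alpha k A i \<le> kappaA m k A * \<bar>A i 0\<bar>"
    using assms by (intro alpha_bounds) auto
  moreover have "\<bar>A i 0\<bar> > 0"
    using assms by simp
  ultimately have "\<bar>A i 0\<bar> < kappaA m k A * \<bar>A i 0\<bar>" "\<bar>A i 0\<bar> > 0"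
    by linarith+
  then show ?thesis
    by simp
qed

lemma kappaB_gt_1:
  assumes "j < n" and "k \<ge> 1" and "\<And>q. q < k \<Longrightarrow> B q j \<noteq> 0"
  shows "1 < kappaB k n B"
proof -
  have "\<bar>B 0 j\<bar> < beta k B j \<and> beta k B j \<le> kappaB k n B * \<bar>B 0 j\<bar>"
    using assms by (intro beta_bounds) auto
  moreover have "\<bar>B 0 j\<bar> > 0"
    using assms by simp
  ultimately have "\<bar>B 0 j\<bar> < kappaB k n B * \<bar>B 0 j\<bar>" "\<bar>B 0 j\<bar> > 0"
    by linarith+
  then show ?thesis
    by simp
qed

section \<open>Sliced dot products\<close>

definition slicing_error_factor :: "nat \<Rightarrow> nat \<Rightarrow> nat \<Rightarrow> real \<Rightarrow> real \<Rightarrow> real" where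
  "slicing_error_factor t sA sB \<kappa>A \<kappa>B =
     \<kappa>A / 2 ^ (sA * t) + \<kappa>B / 2 ^ (sB * t) + \<kappa>A * \<kappa>B / 2 ^ ((sA + sB) * t)
     + real (min sA sB) * \<kappa>A * \<kappa>B / 2 ^ (max sA sB * t)"

lemma slicing_error_factor_nonneg:
  "\<kappa>A \<ge> 0 \<Longrightarrow> \<kappa>B \<ge> 0 \<Longrightarrow> slicing_error_factor t sA sB \<kappa>A \<kappa>B \<ge> 0"
  unfolding slicing_error_factor_def by simp

lemma scaled_slice_product_error:
  assumes a: "\<bar>a\<bar> < \<alpha>" "\<alpha> \<le> \<kappa>A * \<bar>a\<bar>" and b: "\<bar>b\<bar> < \<beta>" "\<beta> \<le> \<kappa>B * \<bar>b\<bar>"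
  shows "\<bar>a * b - \<alpha> * \<beta> *
      (\<Sum>(l, h)\<in>slice_pairs sA sB. scaled_slice t (a / \<alpha>) l * scaled_slice t (b / \<beta>) h)\<bar>
    \<le> slicing_error_factor t sA sB \<kappa>A \<kappa>B * (\<bar>a\<bar> * \<bar>b\<bar>)"
proof -
  define E1 :: real where "E1 = 2 ^ (sA * t)"
  define E2 :: real where "E2 = 2 ^ (sB * t)"
  define E3 :: real where "E3 = 2 ^ ((sA + sB) * t)"
  define E4 :: real where "E4 = 2 ^ (max sA sB * t)"
  define s where "s = real (min sA sB)"
  have E: "E1 > 0" "E2 > 0" "E3 > 0" "E4 > 0" "s \<ge> 0"
    by (simp_all add: E1_def E2_def E3_def E4_def s_def)
  have "\<alpha> > 0" "\<beta> > 0"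
    using a b by linarith+
  then have "\<bar>a / \<alpha>\<bar> < 1" "\<bar>b / \<beta>\<bar> < 1" "\<alpha> * \<bar>a / \<alpha>\<bar> = \<bar>a\<bar>" "\<beta> * \<bar>b / \<beta>\<bar> = \<bar>b\<bar>"
    using a b by (simp_all add: abs_div)
  note xy = this
  let ?S = "\<Sum>(l, h)\<in>slice_pairs sA sB. scaled_slice t (a / \<alpha>) l * scaled_slice t (b / \<beta>) h"
  have "a * b - \<alpha> * \<beta> * ?S = (\<alpha> * \<beta>) * (a / \<alpha> * (b / \<beta>) - ?S)"
    using \<open>\<alpha> > 0\<close> \<open>\<beta> > 0\<close> by (simp add: field_simps)
  then have "\<bar>a * b - \<alpha> * \<beta> * ?S\<bar> = \<alpha> * \<beta> * \<bar>a / \<alpha> * (b / \<beta>) - ?S\<bar>"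
    using \<open>\<alpha> > 0\<close> \<open>\<beta> > 0\<close> by (simp add: abs_mult)
  also have "\<dots> \<le> \<alpha> * \<beta> * (\<bar>b / \<beta>\<bar> / E1 + \<bar>a / \<alpha>\<bar> / E2 + 1 / E3 + s / E4)"
    using slice_product_error[OF xy(1,2), of t sA sB] \<open>\<alpha> > 0\<close> \<open>\<beta> > 0\<close>
    unfolding E1_def E2_def E3_def E4_def s_def by (simp add: mult_left_mono)
  also have "\<dots> = \<alpha> * \<bar>b\<bar> / E1 + \<bar>a\<bar> * \<beta> / E2 + \<alpha> * \<beta> / E3 + s * (\<alpha> * \<beta>) / E4"
    using \<open>\<alpha> > 0\<close> \<open>\<beta> > 0\<close> E by (simp add: abs_div field_simps)
  also have "\<dots> \<le> \<kappa>A * \<bar>a\<bar> * \<bar>b\<bar> / E1 + \<bar>a\<bar> * (\<kappa>B * \<bar>b\<bar>) / E2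
      + (\<kappa>A * \<bar>a\<bar>) * (\<kappa>B * \<bar>b\<bar>) / E3 + s * ((\<kappa>A * \<bar>a\<bar>) * (\<kappa>B * \<bar>b\<bar>)) / E4"
  proof -
    have "\<alpha> * \<bar>b\<bar> \<le> \<kappa>A * \<bar>a\<bar> * \<bar>b\<bar>"
      using mult_right_mono[OF a(2)] by simp
    moreover have "\<bar>a\<bar> * \<beta> \<le> \<bar>a\<bar> * (\<kappa>B * \<bar>b\<bar>)"
      using mult_left_mono[OF b(2)] by simp
    moreover have ab: "\<alpha> * \<beta> \<le> (\<kappa>A * \<bar>a\<bar>) * (\<kappa>B * \<bar>b\<bar>)"
      using mult_mono[OF a(2) b(2)] \<open>\<alpha> > 0\<close> \<open>\<beta> > 0\<close> a(2) by linarith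
    moreover have "s * (\<alpha> * \<beta>) \<le> s * ((\<kappa>A * \<bar>a\<bar>) * (\<kappa>B * \<bar>b\<bar>))"
      using mult_left_mono[OF ab E(5)] .
    ultimately show ?thesis
      using E(1-4) by (intro add_mono divide_right_mono) (auto simp: less_imp_le)
  qed
  also have "\<dots> = slicing_error_factor t sA sB \<kappa>A \<kappa>B * (\<bar>a\<bar> * \<bar>b\<bar>)"
    by (simp add: slicing_error_factor_def E1_def E2_def E3_def E4_def s_def algebra_simps
        add_divide_distrib)
  finally show ?thesis .
qed

text \<open>The retained term alpha_i beta_j 2^(-(l+h)t) (A_(l) B^(h))_ij for row a and column b.\<close>
definition slice_product_term ::
    "nat \<Rightarrow> nat \<Rightarrow> (nat \<Rightarrow> real) \<Rightarrow> (nat \<Rightarrow> real) \<Rightarrow> real \<Rightarrow> real \<Rightarrow> nat \<times> nat \<Rightarrow> real" where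
  "slice_product_term t k a b \<alpha> \<beta> lh =
     \<alpha> * \<beta> * (\<Sum>q<k. scaled_slice t (a q / \<alpha>) (fst lh) * scaled_slice t (b q / \<beta>) (snd lh))"

lemma sum_slice_product_terms:
  "(\<Sum>lh\<in>P. slice_product_term t k a b \<alpha> \<beta> lh)
     = (\<Sum>q<k. \<alpha> * \<beta> * (\<Sum>(l, h)\<in>P. scaled_slice t (a q / \<alpha>) l * scaled_slice t (b q / \<beta>) h))"
  by (simp add: slice_product_term_def sum_distrib_left case_prod_unfold sum.swap[of _ P])

lemma sliced_dot_product_error:
  assumes a: "\<And>q. q < k \<Longrightarrow> \<bar>a q\<bar> < \<alpha> \<and> \<alpha> \<le> \<kappa>A * \<bar>a q\<bar>"
    and b: "\<And>q. q < k \<Longrightarrow> \<bar>b q\<bar> < \<beta> \<and> \<beta> \<le> \<kappa>B * \<bar>b q\<bar>"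
  shows "\<bar>(\<Sum>q<k. a q * b q) - (\<Sum>lh\<in>slice_pairs sA sB. slice_product_term t k a b \<alpha> \<beta> lh)\<bar>
    \<le> slicing_error_factor t sA sB \<kappa>A \<kappa>B * (\<Sum>q<k. \<bar>a q\<bar> * \<bar>b q\<bar>)"
proof -
  have "\<bar>(\<Sum>q<k. a q * b q) - (\<Sum>lh\<in>slice_pairs sA sB. slice_product_term t k a b \<alpha> \<beta> lh)\<bar>
      \<le> (\<Sum>q<k. \<bar>a q * b q - \<alpha> * \<beta> * (\<Sum>(l, h)\<in>slice_pairs sA sB.
           scaled_slice t (a q / \<alpha>) l * scaled_slice t (b q / \<beta>) h)\<bar>)"
    unfolding sum_slice_product_terms by (simp add: sum_subtractf[symmetric] sum_abs)
  also have "\<dots> \<le> (\<Sum>q<k. slicing_error_factor t sA sB \<kappa>A \<kappa>B * (\<bar>a q\<bar> * \<bar>b q\<bar>))"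
    using a b by (intro sum_mono scaled_slice_product_error) auto
  finally show ?thesis
    by (simp add: sum_distrib_left)
qed

lemma sum_abs_slice_product_terms_le:
  assumes "\<alpha> > 0" and "\<beta> > 0"
  shows "(\<Sum>lh\<in>slice_pairs sA sB. \<bar>slice_product_term t k a b \<alpha> \<beta> lh\<bar>) \<le> (\<Sum>q<k. \<bar>a q\<bar> * \<bar>b q\<bar>)"
proof -
  have "(\<Sum>lh\<in>slice_pairs sA sB. \<bar>slice_product_term t k a b \<alpha> \<beta> lh\<bar>)
      \<le> (\<Sum>lh\<in>slice_pairs sA sB. \<alpha> * \<beta> *
           (\<Sum>q<k. \<bar>scaled_slice t (a q / \<alpha>) (fst lh)\<bar> * \<bar>scaled_slice t (b q / \<beta>) (snd lh)\<bar>))"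
    using assms unfolding slice_product_term_def
    by (intro sum_mono) (auto simp: abs_mult intro!: mult_left_mono order_trans[OF sum_abs])
  also have "\<dots> = \<alpha> * \<beta> * (\<Sum>q<k. \<Sum>(l, h)\<in>slice_pairs sA sB.
           \<bar>scaled_slice t (a q / \<alpha>) l\<bar> * \<bar>scaled_slice t (b q / \<beta>) h\<bar>)"
    by (simp add: sum_distrib_left case_prod_unfold sum.swap[of _ "slice_pairs sA sB"])
  also have "\<dots> \<le> \<alpha> * \<beta> * (\<Sum>q<k. \<bar>a q / \<alpha>\<bar> * \<bar>b q / \<beta>\<bar>)"
    using assms
    by (intro mult_left_mono sum_mono sum_abs_slice_products_le[OF slice_pairs_subset]) auto
  also have "\<dots> = (\<Sum>q<k. \<bar>a q\<bar> * \<bar>b q\<bar>)"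
    using assms by (simp add: sum_distrib_left abs_div)
  finally show ?thesis .
qed

lemma matmul_slices_div:
  "matmul k (sliceA t k A l) (sliceB t k B h) i j / 2 ^ ((l + h) * t)
     = (\<Sum>q<k. scaled_slice t (A i q / alpha k A i) l * scaled_slice t (B q j / beta k B j) h)"
  unfolding matmul_def sliceA_def sliceB_def scaled_slice_def sum_divide_distrib
  by (simp add: add_mult_distrib power_add)

lemma slice_terms_eq:
  "slice_terms t sA sB k A B i j =
     image_mset (slice_product_term t k (A i) (\<lambda>q. B q j) (alpha k A i) (beta k B j))
       (mset_set (slice_pairs sA sB))"
  unfolding slice_terms_def slice_product_term_def matmul_slices_div
  by (simp add: case_prod_unfold)

lemma slice_terms_truncation_error:
  assumes "i < m" and "j < n"
    and "\<And>q. q < k \<Longrightarrow> A i q \<noteq> 0" and "\<And>q. q < k \<Longrightarrow> B q j \<noteq> 0"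
  shows "\<bar>matmul k A B i j - sum_mset (slice_terms t sA sB k A B i j)\<bar>
    \<le> slicing_error_factor t sA sB (kappaA m k A) (kappaB k n B)
        * matmul k (\<lambda>i q. \<bar>A i q\<bar>) (\<lambda>q j. \<bar>B q j\<bar>) i j"
proof -
  have "\<bar>A i q\<bar> < alpha k A i \<and> alpha k A i \<le> kappaA m k A * \<bar>A i q\<bar>"
    and "\<bar>B q j\<bar> < beta k B j \<and> beta k B j \<le> kappaB k n B * \<bar>B q j\<bar>" if "q < k" for q
    using assms that by (intro alpha_bounds beta_bounds; auto)+
  from sliced_dot_product_error[OF this] show ?thesis
    by (simp add: slice_terms_eq matmul_def sum_unfold_sum_mset[symmetric])
qed

lemma sum_abs_slice_terms_le:
  assumes "i < m" and "j < n" and "k \<ge> 1"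
    and "\<And>q. q < k \<Longrightarrow> A i q \<noteq> 0" and "\<And>q. q < k \<Longrightarrow> B q j \<noteq> 0"
  shows "(\<Sum>x\<in>#slice_terms t sA sB k A B i j. \<bar>x\<bar>) \<le> matmul k (\<lambda>i q. \<bar>A i q\<bar>) (\<lambda>q j. \<bar>B q j\<bar>) i j"
proof -
  have "\<bar>A i 0\<bar> < alpha k A i" "\<bar>B 0 j\<bar> < beta k B j"
    using assms by (intro alpha_bounds[THEN conjunct1] beta_bounds[THEN conjunct1]; auto)+
  then have "alpha k A i > 0" "beta k B j > 0"
    by linarith+
  from sum_abs_slice_product_terms_le[OF this] show ?thesis
    by (simp add: slice_terms_eq matmul_def sum_unfold_sum_mset[symmetric]
        image_mset.compositionality o_def)
qed

section \<open>Floating-point summation\<close>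

lemma gamma_nonneg: "real j * u < 1 \<Longrightarrow> 0 \<le> u \<Longrightarrow> 0 \<le> gamma j u"
  by (simp add: gamma_def)

lemma gamma_mono:
  assumes "j \<le> j'" and "real j' * u < 1" and "0 \<le> u"
  shows "gamma j u \<le> gamma j' u"
proof -
  have "0 \<le> real j * u" "real j * u \<le> real j' * u"
    using assms by (simp_all add: mult_right_mono)
  then show ?thesis
    unfolding gamma_def using assms(2) by (intro frac_le) auto
qed

lemma gamma_eq: "real j * u < 1 \<Longrightarrow> gamma j u = 1 / (1 - real j * u) - 1"
  by (simp add: gamma_def field_simps)

lemma gamma_Suc_ge:
  assumes "real (Suc j) * u < 1" and "0 \<le> u"
  shows "gamma j u + u * (1 + gamma j u) \<le> gamma (Suc j) u"
proof -
  have "real j * u < 1"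
    using assms by (smt (verit) mult_right_mono of_nat_Suc)
  have "0 < 1 - real j * u" "0 < 1 - real (Suc j) * u"
    using assms \<open>real j * u < 1\<close> by simp_all
  moreover have "(1 + u) * (1 - real (Suc j) * u) \<le> 1 - real j * u"
    using assms(2) by (simp add: algebra_simps)
  ultimately have "(1 + u) / (1 - real j * u) \<le> 1 / (1 - real (Suc j) * u)"
    by (simp add: divide_simps)
  then show ?thesis
    using gamma_eq[OF \<open>real j * u < 1\<close>] gamma_eq[OF assms(1)]
    by (simp add: algebra_simps add_divide_distrib)
qed

lemma abs_sum_mset_le: "\<bar>sum_mset M\<bar> \<le> (\<Sum>x\<in>#M. \<bar>x :: real\<bar>)"
  by (induction M) (auto intro: order_trans[OF abs_triangle_ineq])

lemma sum_mset_abs_nonneg: "0 \<le> (\<Sum>x\<in>#M. \<bar>x :: real\<bar>)"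
  by (induction M) auto

lemma rounded_add_error:
  fixes a b S1 S2 N1 N2 g u \<delta> :: real
  assumes "\<bar>a - S1\<bar> \<le> g * N1" "\<bar>b - S2\<bar> \<le> g * N2" "\<bar>S1\<bar> \<le> N1" "\<bar>S2\<bar> \<le> N2"
    and "\<bar>\<delta>\<bar> \<le> u"
  shows "\<bar>(a + b) * (1 + \<delta>) - (S1 + S2)\<bar> \<le> (g + u * (1 + g)) * (N1 + N2)"
proof -
  have sum: "\<bar>a + b - (S1 + S2)\<bar> \<le> g * (N1 + N2)"
    using assms(1,2) by (simp add: distrib_left abs_le_iff)
  then have "\<bar>a + b\<bar> \<le> (1 + g) * (N1 + N2)"
    using assms(3,4) by (simp add: algebra_simps abs_le_iff)
  then have "\<bar>\<delta> * (a + b)\<bar> \<le> u * ((1 + g) * (N1 + N2))"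
    unfolding abs_mult using assms(5) by (intro mult_mono) auto
  with sum show ?thesis
    by (simp add: algebra_simps abs_le_iff)
qed

lemma fp_sum_size_pos: "fp_sum p M s \<Longrightarrow> size M \<ge> 1"
  by (induction rule: fp_sum.induct) auto

lemma fp_sum_error:
  assumes "fp_sum p M s" and "real (size M - 1) * 2 powr (- real p) < 1"
  shows "\<bar>s - sum_mset M\<bar> \<le> gamma (size M - 1) (2 powr (- real p)) * (\<Sum>x\<in>#M. \<bar>x\<bar>)"
  using assms
proof (induction rule: fp_sum.induct)
  case (single x)
  then show ?case by (simp add: gamma_def)
next
  case (add M1 a M2 b \<delta>)
  define u :: real where "u = 2 powr (- real p)"
  define N where "N = size M1 + size M2 - 1"
  have "size M1 \<ge> 1" "size M2 \<ge> 1"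
    using add.hyps(1,2) fp_sum_size_pos by blast+
  then have N: "N = Suc (N - 1)" "size M1 - 1 \<le> N - 1" "size M2 - 1 \<le> N - 1"
    by (simp_all add: N_def)
  have "0 \<le> u" and "\<bar>\<delta>\<bar> \<le> u" and Nu: "real N * u < 1"
    using add by (simp_all add: u_def N_def)
  have small: "real j * u < 1" if "j \<le> N" for j
    using Nu \<open>0 \<le> u\<close> that by (smt (verit) mult_right_mono of_nat_mono)
  define g where "g = gamma (N - 1) u"
  have weaken: "gamma (size M' - 1) u * (\<Sum>x\<in>#M'. \<bar>x\<bar>) \<le> g * (\<Sum>x\<in>#M'. \<bar>x\<bar>)"
    if "size M' - 1 \<le> N - 1" for M' :: "real multiset"
    unfolding g_def using that N(1)
    by (intro mult_right_mono gamma_mono small sum_mset_abs_nonneg \<open>0 \<le> u\<close>) simp_all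
  have "\<bar>a - sum_mset M1\<bar> \<le> g * (\<Sum>x\<in>#M1. \<bar>x\<bar>)"
    using add.IH(1) small[of "size M1 - 1"] weaken[OF N(2)] N(1,2) unfolding u_def by linarith
  moreover have "\<bar>b - sum_mset M2\<bar> \<le> g * (\<Sum>x\<in>#M2. \<bar>x\<bar>)"
    using add.IH(2) small[of "size M2 - 1"] weaken[OF N(3)] N(1,3) unfolding u_def by linarith
  ultimately have "\<bar>(a + b) * (1 + \<delta>) - (sum_mset M1 + sum_mset M2)\<bar>
      \<le> (g + u * (1 + g)) * ((\<Sum>x\<in>#M1. \<bar>x\<bar>) + (\<Sum>x\<in>#M2. \<bar>x\<bar>))"
    using abs_sum_mset_le abs_sum_mset_le \<open>\<bar>\<delta>\<bar> \<le> u\<close> by (rule rounded_add_error)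
  also have "\<dots> \<le> gamma N u * ((\<Sum>x\<in>#M1. \<bar>x\<bar>) + (\<Sum>x\<in>#M2. \<bar>x\<bar>))"
    using gamma_Suc_ge[of "N - 1" u] N(1) Nu \<open>0 \<le> u\<close> unfolding g_def
    by (intro mult_right_mono add_nonneg_nonneg sum_mset_abs_nonneg) simp_all
  finally show ?case
    by (simp add: N_def u_def)
qed

lemma fp_sum_error_le:
  assumes "fp_sum p M s" and "size M \<le> N" and "real N * 2 powr (- real p) < 1"
  shows "\<bar>s - sum_mset M\<bar> \<le> gamma N (2 powr (- real p)) * (\<Sum>x\<in>#M. \<bar>x\<bar>)"
proof -
  have "real (size M - 1) * 2 powr (- real p) < 1"
    using assms(2,3) by (smt (verit) diff_le_self mult_right_mono of_nat_mono powr_ge_zero)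
  then have "\<bar>s - sum_mset M\<bar> \<le> gamma (size M - 1) (2 powr (- real p)) * (\<Sum>x\<in>#M. \<bar>x\<bar>)"
    by (rule fp_sum_error[OF assms(1)])
  also have "\<dots> \<le> gamma N (2 powr (- real p)) * (\<Sum>x\<in>#M. \<bar>x\<bar>)"
    using assms(2,3) by (intro mult_right_mono gamma_mono sum_mset_abs_nonneg) auto
  finally show ?thesis .
qed

section \<open>The number of slice products\<close>

lemma two_times_sum_Suc_diff:
  fixes a b :: nat
  shows "a \<le> b \<Longrightarrow> 2 * (\<Sum>l = 1..a. b + 1 - l) = a * (2 * b - a + 1)"
proof (induction a)
  case (Suc a)
  then obtain c where "b = Suc a + c"
    using le_Suc_ex by blast
  with Suc show ?case
    by (simp add: sum.cl_ivl_Suc algebra_simps)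
qed simp

lemma card_slice_pairs: "card (slice_pairs sA sB) = chi sA sB"
proof -
  have card_le: "card (slice_pairs a b) = chi a b" if "a \<le> b" for a b
  proof -
    have "slice_pairs a b = Sigma {1..a} (\<lambda>l. {1..b + 1 - l})"
      using that by (auto simp: slice_pairs_def)
    then have "card (slice_pairs a b) = (\<Sum>l = 1..a. b + 1 - l)"
      by simp
    then show ?thesis
      using two_times_sum_Suc_diff[OF that] that by (simp add: chi_def)
  qed
  have "slice_pairs sA sB = prod.swap ` slice_pairs sB sA"
    by (auto simp: slice_pairs_def image_iff max.commute)
  then have "card (slice_pairs sA sB) = card (slice_pairs sB sA)"
    by (simp add: card_image)
  then show ?thesis
    using card_le[of sA sB] card_le[of sB sA]
    by (cases "sA \<le> sB") (simp_all add: chi_def min.commute max.commute)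
qed

lemma size_slice_terms: "size (slice_terms t sA sB k A B i j) = chi sA sB"
  by (simp add: slice_terms_def card_slice_pairs)

theorem mainTheorem2:
  fixes p t sA sB m k n :: nat
    and A B Chat :: "nat \<Rightarrow> nat \<Rightarrow> real"
  defines "u \<equiv> 2 powr (- real p)"
    and "psi \<equiv> chi sA sB"
    and "kA \<equiv> kappaA m k A" and "kB \<equiv> kappaB k n B"
    and "zeta \<equiv> kappaA m k A / 2 ^ (sA * t) + kappaB k n B / 2 ^ (sB * t)
              + kappaA m k A * kappaB k n B / 2 ^ ((sA + sB) * t)"
  assumes "p \<ge> 2" and "t \<ge> 1" and "sA \<ge> 1" and "sB \<ge> 1"
    and "m \<ge> 1" and "k \<ge> 1" and "n \<ge> 1"
    and A_fp: "\<And>i q. i < m \<Longrightarrow> q < k \<Longrightarrow> A i q \<in> Fp p \<and> A i q \<noteq> 0"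
    and B_fp: "\<And>q j. q < k \<Longrightarrow> j < n \<Longrightarrow> B q j \<in> Fp p \<and> B q j \<noteq> 0"
    and exact_conv: "\<And>l h i j. (l, h) \<in> slice_pairs sA sB \<Longrightarrow> i < m \<Longrightarrow> j < n \<Longrightarrow>
          matmul k (sliceA t k A l) (sliceB t k B h) i j \<in> Fp p"
    and computed: "\<And>i j. i < m \<Longrightarrow> j < n \<Longrightarrow> fp_sum p (slice_terms t sA sB k A B i j) (Chat i j)"
    and "real psi * u < 1"
  shows "\<forall>i<m. \<forall>j<n.
     \<bar>matmul k A B i j - Chat i j\<bar> \<le>
       (if sA \<le> sB then
          zeta + real sA * kA * kB / 2 ^ (sB * t)
            + gamma psi u * (1 + zeta + real sA * kA * kB / 2 ^ (sB * t))
        else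
          zeta + real sB * kA * kB / 2 ^ (sA * t)
            + gamma psi u * (1 + zeta + real sB * kA * kB / 2 ^ (sA * t)))
       * matmul k (\<lambda>i q. \<bar>A i q\<bar>) (\<lambda>q j. \<bar>B q j\<bar>) i j"
proof (intro allI impI)
  fix i j assume ij: "i < m" "j < n"
  let ?T = "matmul k (\<lambda>i q. \<bar>A i q\<bar>) (\<lambda>q j. \<bar>B q j\<bar>) i j"
  let ?Z = "slicing_error_factor t sA sB kA kB"
  let ?terms = "slice_terms t sA sB k A B i j"
  have nonzero: "\<And>q. q < k \<Longrightarrow> A i q \<noteq> 0" "\<And>q. q < k \<Longrightarrow> B q j \<noteq> 0"
    using A_fp B_fp ij by blast+
  have truncation: "\<bar>matmul k A B i j - sum_mset ?terms\<bar> \<le> ?Z * ?T"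
    unfolding kA_def kB_def using ij nonzero by (rule slice_terms_truncation_error)
  have "\<bar>Chat i j - sum_mset ?terms\<bar> \<le> gamma psi u * (\<Sum>x\<in>#?terms. \<bar>x\<bar>)"
    using fp_sum_error_le[OF computed[OF ij]] \<open>real psi * u < 1\<close>
    unfolding u_def psi_def size_slice_terms by simp
  also have "\<dots> \<le> gamma psi u * ?T"
    using sum_abs_slice_terms_le[where A = A and B = B, OF ij \<open>k \<ge> 1\<close> nonzero] \<open>real psi * u < 1\<close>
    by (intro mult_left_mono gamma_nonneg) (simp_all add: u_def)
  finally have rounding: "\<bar>Chat i j - sum_mset ?terms\<bar> \<le> gamma psi u * ?T" .
  have "0 \<le> ?Z * (gamma psi u * ?T)"
    using kappaA_gt_1[where A = A, OF ij(1) \<open>k \<ge> 1\<close> nonzero(1)]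
      kappaB_gt_1[where B = B, OF ij(2) \<open>k \<ge> 1\<close> nonzero(2)]
      gamma_nonneg[OF \<open>real psi * u < 1\<close>]
    by (auto intro!: mult_nonneg_nonneg slicing_error_factor_nonneg sum_nonneg
        simp: kA_def kB_def u_def matmul_def)
  with truncation rounding have "\<bar>matmul k A B i j - Chat i j\<bar> \<le> (?Z + gamma psi u * (1 + ?Z)) * ?T"
    by (simp add: algebra_simps abs_le_iff)
  then show "\<bar>matmul k A B i j - Chat i j\<bar> \<le> (if sA \<le> sB then
          zeta + real sA * kA * kB / 2 ^ (sB * t)
            + gamma psi u * (1 + zeta + real sA * kA * kB / 2 ^ (sB * t))
        else
          zeta + real sB * kA * kB / 2 ^ (sA * t)
            + gamma psi u * (1 + zeta + real sB * kA * kB / 2 ^ (sA * t))) * ?T"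
    by (cases "sA \<le> sB") (simp_all add: slicing_error_factor_def zeta_def kA_def kB_def add.assoc)
qed

end
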